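(* Let $(\mathcal{X},Y)$ and $(\mathcal{X}',Y')$ be finite regular CW pairs. Suppose there is a poset isomorphism $\varphi:\mathcal{X}\to\mathcal{X}'$ of cell posets with $\varphi(\mathcal{X}_Y)=\mathcal{X}'_{Y'}$. Then there exists a homeomorphism $\Phi:|\mathcal{X}|\to|\mathcal{X}'|$ mapping each cell $\sigma$ onto $\varphi(\sigma)$ and mapping $Y$ onto $Y'$.
   Context: Cells. Let $X$ be Hausdorff. A subset $\sigma\subset X$ is an $n$-cell if there is a homeomorphism $\alpha:D^n\to\sigma$ from the closed unit ball. Its relative boundary is $d\sigma=\alpha(\partial D^n)$. Regular CW complexes. A finite regular CW complex $\mathcal{X}$ with support $|\mathcal{X}|=X$ is a finite collection of cells in $X$ such that - their relative interiors $\sigma\setminus d\sigma$ partition $X$, and - each relative boundary $d\sigma$ is a union of cells of $\mathcal{X}$ of smaller dimension. The cell poset is $\mathcal{X}$ ordered by inclusion. Standard pairs. A pair $\tau\subset\sigma$ is a standard pair of cells of codimension $k$ if some homeomorphism $\alpha:D^n\to\sigma$ has $\alpha^{-1}(\tau)=\{x\in D^n:x_1=\dots=x_k=0\}$. Regular CW pairs. A finite regular CW pair of codimension $k$ is $(\mathcal{X},Y)$ with $\mathcal{X}$ a finite regular CW complex and $Y\subset|\mathcal{X}|$ such that for every $\sigma\in\mathcal{X}$ either $\sigma\cap Y=\emptyset$ or $\sigma\cap Y\subset\sigma$ is a standard pair of cells of codimension $k$. Write $\mathcal{X}_Y=\{\sigma\in\mathcal{X}:\sigma\cap Y\ne\emptyset\}$.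 *)

theory Defs
  imports "HOL-Analysis.Analysis"
begin

text \<open>Closed unit ball D^n and unit sphere in R^n, with R^n = Euclidean_space n
  (functions nat => real vanishing from index n on; coordinate x_i is x (i-1)).\<close>

definition disc :: "nat \<Rightarrow> (nat \<Rightarrow> real) set" where
  "disc n = {x \<in> topspace (Euclidean_space n). (\<Sum>i<n. (x i)\<^sup>2) \<le> 1}"

definition disc_boundary :: "nat \<Rightarrow> (nat \<Rightarrow> real) set" where
  "disc_boundary n = {x \<in> topspace (Euclidean_space n). (\<Sum>i<n. (x i)\<^sup>2) = 1}"

definition cell_param :: "'a topology \<Rightarrow> nat \<Rightarrow> 'a set \<Rightarrow> ((nat \<Rightarrow> real) \<Rightarrow> 'a) \<Rightarrow> bool" where
  "cell_param X n \<sigma> \<alpha> \<longleftrightarrow> \<sigma> \<subseteq> topspace X \<and>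
     homeomorphic_map (subtopology (Euclidean_space n) (disc n)) (subtopology X \<sigma>) \<alpha>"

definition is_cell :: "'a topology \<Rightarrow> nat \<Rightarrow> 'a set \<Rightarrow> bool" where
  "is_cell X n \<sigma> \<longleftrightarrow> (\<exists>\<alpha>. cell_param X n \<sigma> \<alpha>)"

text \<open>Dimension and relative boundary of a cell (well defined by invariance of domain).\<close>
definition cell_dim :: "'a topology \<Rightarrow> 'a set \<Rightarrow> nat" where
  "cell_dim X \<sigma> = (SOME n. is_cell X n \<sigma>)"

definition cell_boundary :: "'a topology \<Rightarrow> 'a set \<Rightarrow> 'a set" where
  "cell_boundary X \<sigma> = (SOME B. \<exists>n \<alpha>. cell_param X n \<sigma> \<alpha> \<and> B = \<alpha> ` disc_boundary n)"

definition cell_interior :: "'a topology \<Rightarrow> 'a set \<Rightarrow> 'a set" where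
  "cell_interior X \<sigma> = \<sigma> - cell_boundary X \<sigma>"

definition finite_regular_CW :: "'a topology \<Rightarrow> 'a set set \<Rightarrow> bool" where
  "finite_regular_CW X \<X> \<longleftrightarrow>
     Hausdorff_space X \<and> finite \<X> \<and>
     (\<forall>\<sigma>\<in>\<X>. \<exists>n. is_cell X n \<sigma>) \<and>
     (\<Union>\<sigma>\<in>\<X>. cell_interior X \<sigma>) = topspace X \<and>
     (\<forall>\<sigma>\<in>\<X>. \<forall>\<tau>\<in>\<X>. \<sigma> \<noteq> \<tau> \<longrightarrow> cell_interior X \<sigma> \<inter> cell_interior X \<tau> = {}) \<and>
     (\<forall>\<sigma>\<in>\<X>. \<exists>\<C>\<subseteq>\<X>. (\<forall>\<tau>\<in>\<C>. cell_dim X \<tau> < cell_dim X \<sigma>) \<and>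
                       cell_boundary X \<sigma> = \<Union>\<C>)"

definition standard_pair :: "'a topology \<Rightarrow> nat \<Rightarrow> 'a set \<Rightarrow> 'a set \<Rightarrow> bool" where
  "standard_pair X k \<tau> \<sigma> \<longleftrightarrow> \<tau> \<subseteq> \<sigma> \<and>
     (\<exists>n \<alpha>. k \<le> n \<and> cell_param X n \<sigma> \<alpha> \<and>
            {x \<in> disc n. \<alpha> x \<in> \<tau>} = {x \<in> disc n. \<forall>i<k. x i = 0})"

definition finite_regular_CW_pair :: "'a topology \<Rightarrow> 'a set set \<Rightarrow> 'a set \<Rightarrow> nat \<Rightarrow> bool" where
  "finite_regular_CW_pair X \<X> Y k \<longleftrightarrow>
     finite_regular_CW X \<X> \<and> Y \<subseteq> topspace X \<and>
     (\<forall>\<sigma>\<in>\<X>. \<sigma> \<inter> Y = {} \<or> standard_pair X k (\<sigma> \<inter> Y) \<sigma>)"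

definition cells_meeting :: "'a set set \<Rightarrow> 'a set \<Rightarrow> 'a set set" where
  "cells_meeting \<X> Y = {\<sigma> \<in> \<X>. \<sigma> \<inter> Y \<noteq> {}}"

definition poset_iso :: "('a set \<Rightarrow> 'b set) \<Rightarrow> 'a set set \<Rightarrow> 'b set set \<Rightarrow> bool" where
  "poset_iso \<phi> \<X> \<X>' \<longleftrightarrow> bij_betw \<phi> \<X> \<X>' \<and>
     (\<forall>\<sigma>\<in>\<X>. \<forall>\<tau>\<in>\<X>. \<sigma> \<subseteq> \<tau> \<longleftrightarrow> \<phi> \<sigma> \<subseteq> \<phi> \<tau>)"

end

theory Submission
  imports Defs "HOL-Homology.Invariance_of_Domain"
begin

text \<open>
  The homeomorphism is built cell by cell, by induction along the face order.  Suppose it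
  is already defined on the boundary of a cell \<sigma>, mapping it homeomorphically onto the
  boundary of \<phi> \<sigma> and \<open>d\<sigma> \<inter> Y\<close> onto \<open>d(\<phi> \<sigma>) \<inter> Y'\<close>.  Choosing characteristic maps in which
  Y and Y' both become the coordinate subspace \<open>x\<^sub>1 = \<dots> = x\<^sub>k = 0\<close> (the standard-pair
  condition), the boundary map becomes a homeomorphism of unit spheres preserving that
  subspace, and its radial extension \<open>x \<mapsto> |x| h(x/|x|)\<close> (Alexander's trick) is a homeomorphism
  of discs that still preserves it.  Invariance of domain makes the boundary of a cell
  independent of the chosen parametrisation, so the pieces fit together.  The glued map is a
  continuous bijection from a compact space to a Hausdorff space, hence a homeomorphism.
\<close>

section \<open>Discs and spheres\<close>

definition sqnorm :: "nat \<Rightarrow> (nat \<Rightarrow> real) \<Rightarrow> real" where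
  "sqnorm n x = (\<Sum>i<n. (x i)\<^sup>2)"

definition coord_subspace :: "nat \<Rightarrow> (nat \<Rightarrow> real) set" where
  "coord_subspace k = {x. \<forall>i<k. x i = 0}"

lemma continuous_on_coordinate: "continuous_on S (\<lambda>x::nat\<Rightarrow>real. x i)"
  by (rule continuous_on_subset[OF continuous_on_product_coordinates]) simp

lemma continuous_on_sqnorm [continuous_intros]: "continuous_on S (sqnorm n)"
  unfolding sqnorm_def by (intro continuous_intros continuous_on_coordinate)

lemma sqnorm_nonneg: "0 \<le> sqnorm n x"
  unfolding sqnorm_def by (simp add: sum_nonneg)

lemma sqnorm_scale: "sqnorm n (\<lambda>i. c * x i) = c\<^sup>2 * sqnorm n x"
  unfolding sqnorm_def by (simp add: sum_distrib_left power_mult_distrib)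

lemma sqnorm_eq_0:
  assumes "\<forall>i\<ge>n. x i = 0" and "sqnorm n x = 0"
  shows "x = (\<lambda>i. 0)"
proof
  fix i
  have "\<forall>j\<in>{..<n}. (x j)\<^sup>2 = 0"
    using assms(2) unfolding sqnorm_def by (subst sum_nonneg_eq_0_iff[symmetric]) auto
  then show "x i = 0"
    using assms(1) by (cases "i < n") auto
qed

lemma disc_eq: "disc n = {x. (\<forall>i\<ge>n. x i = 0) \<and> sqnorm n x \<le> 1}"
  by (simp add: disc_def sqnorm_def topspace_Euclidean_space)

lemma disc_boundary_eq: "disc_boundary n = {x. (\<forall>i\<ge>n. x i = 0) \<and> sqnorm n x = 1}"
  by (simp add: disc_boundary_def sqnorm_def topspace_Euclidean_space)

lemma disc_boundary_subset_disc: "disc_boundary n \<subseteq> disc n"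
  by (auto simp: disc_eq disc_boundary_eq)

lemma disc_subset_Euclidean_space: "disc n \<subseteq> topspace (Euclidean_space n)"
  by (auto simp: disc_eq topspace_Euclidean_space)

lemma zero_in_disc: "(\<lambda>i. 0) \<in> disc n"
  by (simp add: disc_eq sqnorm_def)

lemma abs_coordinate_le_1_disc:
  assumes "x \<in> disc n"
  shows "\<bar>x i\<bar> \<le> 1"
proof (cases "i < n")
  case True
  have "(x i)\<^sup>2 \<le> sqnorm n x"
    unfolding sqnorm_def using True by (intro member_le_sum) auto
  with assms have "(x i)\<^sup>2 \<le> 1"
    by (simp add: disc_eq)
  then show ?thesis
    by (simp add: abs_square_le_1)
qed (use assms in \<open>simp add: disc_eq\<close>)

lemma Euclidean_space_eq_top_of_set:
  "Euclidean_space n = top_of_set (topspace (Euclidean_space n))"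
  by (simp add: Euclidean_space_def euclidean_product_topology topspace_Euclidean_space)

lemma subtopology_Euclidean_space_disc:
  "subtopology (Euclidean_space n) (disc n) = top_of_set (disc n)"
  using disc_subset_Euclidean_space[of n]
  by (subst Euclidean_space_eq_top_of_set) (simp add: subtopology_subtopology inf.absorb2)

lemma closed_disc: "closed (disc n)"
proof -
  have "disc n = topspace (Euclidean_space n) \<inter> sqnorm n -` {..1}"
    by (auto simp: disc_eq topspace_Euclidean_space)
  moreover have "closed (topspace (Euclidean_space n))"
    using closedin_Euclidean_space[of n] by (simp add: euclidean_product_topology)
  moreover have "closed (sqnorm n -` {..1})"
    by (intro closed_vimage continuous_on_sqnorm) auto
  ultimately show ?thesis
    by (simp add: closed_Int)
qed

lemma compact_disc: "compact (disc n)"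
proof -
  have "compactin (powertop_real UNIV) (UNIV \<rightarrow>\<^sub>E {-1..1})"
    by (simp add: compactin_PiE)
  moreover have "disc n \<subseteq> UNIV \<rightarrow>\<^sub>E {-1..1}"
    using abs_coordinate_le_1_disc by (auto simp: abs_le_iff)
  moreover have "closedin (powertop_real UNIV) (disc n)"
    using closed_disc by (simp add: euclidean_product_topology)
  ultimately have "compactin (powertop_real UNIV) (disc n)"
    by (rule closed_compactin)
  then show ?thesis
    by (simp add: euclidean_product_topology)
qed

lemma openin_disc_interior: "openin (Euclidean_space n) (disc n - disc_boundary n)"
proof -
  have "disc n - disc_boundary n = topspace (Euclidean_space n) \<inter> sqnorm n -` {..<1}"
    by (auto simp: disc_eq disc_boundary_eq topspace_Euclidean_space)
  moreover have "open (sqnorm n -` {..<1})"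
    by (intro open_vimage continuous_on_sqnorm) auto
  ultimately show ?thesis
    by (subst Euclidean_space_eq_top_of_set) (simp add: openin_open_Int)
qed

section \<open>Radial extension of sphere maps\<close>

definition radial_extension ::
    "nat \<Rightarrow> ((nat \<Rightarrow> real) \<Rightarrow> (nat \<Rightarrow> real)) \<Rightarrow> (nat \<Rightarrow> real) \<Rightarrow> (nat \<Rightarrow> real)" where
  "radial_extension n h x =
     (if sqnorm n x = 0 then (\<lambda>i. 0)
      else (\<lambda>i. sqrt (sqnorm n x) * h (\<lambda>j. x j / sqrt (sqnorm n x)) i))"

lemma radial_direction_in_disc_boundary:
  assumes "\<forall>i\<ge>n. x i = 0" and "sqnorm n x \<noteq> 0"
  shows "(\<lambda>j. x j / sqrt (sqnorm n x)) \<in> disc_boundary n"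
proof -
  have "sqnorm n (\<lambda>j. x j / sqrt (sqnorm n x)) = (1 / sqrt (sqnorm n x))\<^sup>2 * sqnorm n x"
    using sqnorm_scale[of n "1 / sqrt (sqnorm n x)" x] by simp
  also have "\<dots> = 1"
    using assms(2) sqnorm_nonneg[of n x] by (simp add: power_divide)
  finally have "sqnorm n (\<lambda>j. x j / sqrt (sqnorm n x)) = 1" .
  then show ?thesis
    using assms(1) by (simp add: disc_boundary_eq)
qed

context
  fixes n m :: nat and h :: "(nat \<Rightarrow> real) \<Rightarrow> (nat \<Rightarrow> real)"
  assumes maps_boundary: "h ` disc_boundary n = disc_boundary m"
begin

lemma radial_extension_eq_on_boundary:
  "x \<in> disc_boundary n \<Longrightarrow> radial_extension n h x = h x"
  by (simp add: radial_extension_def disc_boundary_eq)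

lemma sqnorm_radial_extension:
  assumes "\<forall>i\<ge>n. x i = 0"
  shows "sqnorm m (radial_extension n h x) = sqnorm n x"
proof (cases "sqnorm n x = 0")
  case False
  let ?u = "\<lambda>j. x j / sqrt (sqnorm n x)"
  have "h ?u \<in> disc_boundary m"
    using maps_boundary radial_direction_in_disc_boundary[OF assms False] by blast
  then show ?thesis
    using False sqnorm_nonneg[of n x]
    by (simp add: radial_extension_def sqnorm_scale disc_boundary_eq)
qed (simp add: radial_extension_def sqnorm_def)

lemma radial_extension_in_disc:
  assumes "x \<in> disc n"
  shows "radial_extension n h x \<in> disc m"
proof -
  have support: "\<forall>i\<ge>n. x i = 0"
    using assms by (simp add: disc_eq)
  have "\<forall>i\<ge>m. radial_extension n h x i = 0"
  proof (cases "sqnorm n x = 0")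
    case False
    then have "h (\<lambda>j. x j / sqrt (sqnorm n x)) \<in> disc_boundary m"
      using maps_boundary radial_direction_in_disc_boundary[OF support] by blast
    then show ?thesis
      using False by (simp add: radial_extension_def disc_boundary_eq)
  qed (simp add: radial_extension_def)
  then show ?thesis
    using assms sqnorm_radial_extension[of x] by (simp add: disc_eq)
qed

lemma disc_subset_radial_extension_image:
  assumes y: "y \<in> disc m"
  shows "y \<in> radial_extension n h ` disc n"
proof (cases "sqnorm m y = 0")
  case True
  then have "y = (\<lambda>i. 0)"
    using y sqnorm_eq_0[of m y] by (simp add: disc_eq)
  moreover have "radial_extension n h (\<lambda>i. 0) = (\<lambda>i. 0)"
    by (simp add: radial_extension_def sqnorm_def)
  ultimately show ?thesis
    using zero_in_disc by (metis image_eqI)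
next
  case False
  define s where "s = sqrt (sqnorm m y)"
  have s: "0 < s" "s \<le> 1"
    using False y sqnorm_nonneg[of m y] by (auto simp: s_def disc_eq)
  obtain x' where x': "x' \<in> disc_boundary n" "h x' = (\<lambda>i. y i / s)"
    using radial_direction_in_disc_boundary[of m y] y False maps_boundary
    by (auto simp: s_def disc_eq) (metis imageE)
  define x where "x = (\<lambda>i. s * x' i)"
  have sqnorm_x: "sqnorm n x = s\<^sup>2"
    using x'(1) by (simp add: x_def sqnorm_scale disc_boundary_eq)
  then have "x \<in> disc n"
    using x'(1) s by (auto simp: disc_eq disc_boundary_eq x_def power_le_one)
  moreover have "radial_extension n h x = y"
    using s x' sqnorm_x by (simp add: radial_extension_def x_def)
  ultimately show ?thesis
    by blast
qed

lemma radial_extension_image: "radial_extension n h ` disc n = disc m"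
  using radial_extension_in_disc disc_subset_radial_extension_image by blast

lemma radial_extension_in_coord_subspace_iff:
  assumes h_coords: "\<And>s. s \<in> disc_boundary n \<Longrightarrow> h s \<in> coord_subspace k \<longleftrightarrow> s \<in> coord_subspace k"
    and "x \<in> disc n"
  shows "radial_extension n h x \<in> coord_subspace k \<longleftrightarrow> x \<in> coord_subspace k"
proof (cases "sqnorm n x = 0")
  case True
  then show ?thesis
    using assms(2) sqnorm_eq_0[of n x] by (simp add: radial_extension_def disc_eq coord_subspace_def)
next
  case False
  let ?u = "\<lambda>j. x j / sqrt (sqnorm n x)"
  have "?u \<in> disc_boundary n"
    using assms(2) False radial_direction_in_disc_boundary by (simp add: disc_eq)
  then have "h ?u \<in> coord_subspace k \<longleftrightarrow> ?u \<in> coord_subspace k"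
    by (rule h_coords)
  then show ?thesis
    using False sqnorm_nonneg[of n x] by (simp add: radial_extension_def coord_subspace_def)
qed

lemma radial_extension_coord_subspace:
  assumes h_inj: "inj_on h (disc_boundary n)"
    and h_coords: "h ` (disc_boundary n \<inter> coord_subspace k) = disc_boundary m \<inter> coord_subspace k"
  shows "radial_extension n h ` (disc n \<inter> coord_subspace k) = disc m \<inter> coord_subspace k"
proof -
  have "h s \<in> coord_subspace k \<longleftrightarrow> s \<in> coord_subspace k" if s: "s \<in> disc_boundary n" for s
  proof
    assume "h s \<in> coord_subspace k"
    then obtain s' where "s' \<in> disc_boundary n \<inter> coord_subspace k" "h s = h s'"
      using h_coords maps_boundary s by blast
    then show "s \<in> coord_subspace k"
      using h_inj s by (metis IntD1 IntD2 inj_onD)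
  qed (use h_coords s in blast)
  then have coords_iff: "x \<in> disc n \<Longrightarrow>
      radial_extension n h x \<in> coord_subspace k \<longleftrightarrow> x \<in> coord_subspace k" for x
    by (rule radial_extension_in_coord_subspace_iff)
  show ?thesis
  proof
    show "radial_extension n h ` (disc n \<inter> coord_subspace k) \<subseteq> disc m \<inter> coord_subspace k"
    proof (rule image_subsetI)
      fix x
      assume "x \<in> disc n \<inter> coord_subspace k"
      then show "radial_extension n h x \<in> disc m \<inter> coord_subspace k"
        using coords_iff[of x] radial_extension_in_disc[of x] by simp
    qed
  next
    show "disc m \<inter> coord_subspace k \<subseteq> radial_extension n h ` (disc n \<inter> coord_subspace k)"
    proof
      fix y
      assume y: "y \<in> disc m \<inter> coord_subspace k"
      then have "y \<in> radial_extension n h ` disc n"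
        by (simp add: radial_extension_image)
      then obtain x where x: "x \<in> disc n" and y_eq: "y = radial_extension n h x"
        by (rule imageE)
      then have "x \<in> coord_subspace k"
        using y coords_iff by simp
      with x y_eq show "y \<in> radial_extension n h ` (disc n \<inter> coord_subspace k)"
        by simp
    qed
  qed
qed

lemma inj_on_radial_extension:
  assumes h_inj: "inj_on h (disc_boundary n)"
  shows "inj_on (radial_extension n h) (disc n)"
proof (rule inj_onI)
  fix x y
  assume x: "x \<in> disc n" and y: "y \<in> disc n"
    and eq: "radial_extension n h x = radial_extension n h y"
  have support: "\<forall>i\<ge>n. x i = 0" "\<forall>i\<ge>n. y i = 0"
    using x y by (simp_all add: disc_eq)
  have same_norm: "sqnorm n x = sqnorm n y"
    using sqnorm_radial_extension[OF support(1)] sqnorm_radial_extension[OF support(2)] eq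
    by simp
  show "x = y"
  proof (cases "sqnorm n x = 0")
    case True
    then show ?thesis
      using support same_norm sqnorm_eq_0 by metis
  next
    case False
    let ?r = "sqrt (sqnorm n x)"
    have r: "?r \<noteq> 0"
      using False by simp
    have "(\<lambda>i. ?r * h (\<lambda>j. x j / ?r) i) = (\<lambda>i. ?r * h (\<lambda>j. y j / ?r) i)"
      using eq False same_norm by (simp add: radial_extension_def)
    then have "h (\<lambda>j. x j / ?r) = h (\<lambda>j. y j / ?r)"
      using r by (simp add: fun_eq_iff)
    moreover have "(\<lambda>j. x j / ?r) \<in> disc_boundary n" "(\<lambda>j. y j / ?r) \<in> disc_boundary n"
      using radial_direction_in_disc_boundary[OF support(1) False]
        radial_direction_in_disc_boundary[OF support(2)] False same_norm
      by simp_all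
    ultimately have "(\<lambda>j. x j / ?r) = (\<lambda>j. y j / ?r)"
      using h_inj by (meson inj_onD)
    then show ?thesis
      using r by (simp add: fun_eq_iff)
  qed
qed

end

context
  fixes n m :: nat and h :: "(nat \<Rightarrow> real) \<Rightarrow> (nat \<Rightarrow> real)"
  assumes maps_boundary: "h ` disc_boundary n = disc_boundary m"
begin

lemma abs_radial_extension_le:
  assumes "x \<in> disc n"
  shows "\<bar>radial_extension n h x i\<bar> \<le> sqrt (sqnorm n x)"
proof (cases "sqnorm n x = 0")
  case False
  let ?u = "\<lambda>j. x j / sqrt (sqnorm n x)"
  have "h ?u \<in> disc m"
    using maps_boundary radial_direction_in_disc_boundary[of n x] assms False
      disc_boundary_subset_disc by (auto simp: disc_eq)
  then have "\<bar>h ?u i\<bar> \<le> 1"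
    by (rule abs_coordinate_le_1_disc)
  then have "sqrt (sqnorm n x) * \<bar>h ?u i\<bar> \<le> sqrt (sqnorm n x)"
    using mult_left_le[of _ "sqrt (sqnorm n x)"] sqnorm_nonneg[of n x] by simp
  then show ?thesis
    using False sqnorm_nonneg[of n x] by (simp add: radial_extension_def abs_mult)
qed (simp add: radial_extension_def)

lemma radial_extension_tendsto_origin:
  assumes "sqnorm n x = 0"
  shows "((\<lambda>y. radial_extension n h y i) \<longlongrightarrow> 0) (at x within disc n)"
proof (rule Lim_null_comparison)
  show "\<forall>\<^sub>F y in at x within disc n. norm (radial_extension n h y i) \<le> sqrt (sqnorm n y)"
    using abs_radial_extension_le by (auto simp: eventually_at_filter)
  have "continuous_on UNIV (\<lambda>y. sqrt (sqnorm n y))"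
    by (intro continuous_intros)
  then have "((\<lambda>y. sqrt (sqnorm n y)) \<longlongrightarrow> sqrt (sqnorm n x)) (at x within disc n)"
    by (meson UNIV_I continuous_on_def tendsto_within_subset subset_UNIV)
  then show "((\<lambda>y. sqrt (sqnorm n y)) \<longlongrightarrow> 0) (at x within disc n)"
    using assms by simp
qed

lemma continuous_on_radial_extension_off_origin:
  assumes h_cont: "continuous_on (disc_boundary n) h"
  shows "continuous_on (disc n \<inter> {y. sqnorm n y \<noteq> 0}) (\<lambda>y. radial_extension n h y i)"
proof -
  let ?U = "disc n \<inter> {y. sqnorm n y \<noteq> 0}"
  have "continuous_on ?U (\<lambda>y. \<lambda>j. y j / sqrt (sqnorm n y))"
    by (intro continuous_on_coordinatewise_then_product continuous_intros continuous_on_coordinate)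
       auto
  moreover have "(\<lambda>y. \<lambda>j. y j / sqrt (sqnorm n y)) ` ?U \<subseteq> disc_boundary n"
    using radial_direction_in_disc_boundary by (auto simp: disc_eq)
  ultimately have "continuous_on ?U (h \<circ> (\<lambda>y. \<lambda>j. y j / sqrt (sqnorm n y)))"
    by (intro continuous_on_compose continuous_on_subset[OF h_cont])
  then have "continuous_on ?U (\<lambda>y. (h \<circ> (\<lambda>y. \<lambda>j. y j / sqrt (sqnorm n y))) y i)"
    by (rule continuous_on_product_then_coordinatewise)
  then have "continuous_on ?U (\<lambda>y. sqrt (sqnorm n y) * h (\<lambda>j. y j / sqrt (sqnorm n y)) i)"
    by (intro continuous_intros) simp
  then show ?thesis
    by (rule continuous_on_eq) (auto simp: radial_extension_def)
qed

lemma continuous_on_radial_extension: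
  assumes h_cont: "continuous_on (disc_boundary n) h"
  shows "continuous_on (disc n) (radial_extension n h)"
proof (rule continuous_on_coordinatewise_then_product)
  fix i
  show "continuous_on (disc n) (\<lambda>x. radial_extension n h x i)"
    unfolding continuous_on_eq_continuous_within
  proof
    fix x
    assume x: "x \<in> disc n"
    show "continuous (at x within disc n) (\<lambda>x. radial_extension n h x i)"
    proof (cases "sqnorm n x = 0")
      case True
      then show ?thesis
        using radial_extension_tendsto_origin by (simp add: continuous_within radial_extension_def)
    next
      case False
      have "open {y. sqnorm n y \<noteq> 0}"
        using continuous_on_sqnorm[of UNIV n] by (simp add: open_Collect_neq continuous_on_const)
      then have "at x within disc n \<inter> {y. sqnorm n y \<noteq> 0} = at x within disc n"
        using False by (intro at_within_nhd[of x]) auto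
      then show ?thesis
        using continuous_on_radial_extension_off_origin[OF h_cont] x False
        by (metis (mono_tags, lifting) Int_iff continuous_on_eq_continuous_within mem_Collect_eq)
    qed
  qed
qed

end

section \<open>Invariance of domain for discs\<close>

lemma continuous_curve_enters_open:
  fixes c :: "real \<Rightarrow> (nat \<Rightarrow> real)"
  assumes "open W" "c 0 \<in> W" "continuous_on UNIV c"
  obtains t where "t > 0" "c t \<in> W"
proof -
  have "open (c -` W)" and "0 \<in> c -` W"
    using assms by (simp_all add: open_vimage)
  then obtain e where e: "e > 0" "ball 0 e \<subseteq> c -` W"
    by (meson open_contains_ball_eq)
  moreover have "e/2 \<in> ball 0 e"
    using e by (simp add: dist_real_def)
  ultimately have "e/2 \<in> c -` W"
    by blast
  then show thesis
    using that[of "e/2"] e by simp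
qed

context
  fixes g :: "(nat \<Rightarrow> real) \<Rightarrow> (nat \<Rightarrow> real)" and m n :: nat
  assumes g_cont: "continuous_on (disc m) g"
    and g_inj: "inj_on g (disc m)"
    and g_maps: "g ` disc m \<subseteq> disc n"
    and dim_le: "n \<le> m"
begin

lemma openin_image_disc_interior:
  "openin (Euclidean_space m) (g ` (disc m - disc_boundary m))"
proof (rule invariance_of_domain_Euclidean_space[OF openin_disc_interior])
  have "g ` disc m \<subseteq> topspace (Euclidean_space m)"
    using g_maps disc_subset_Euclidean_space[of n] dim_le
    by (fastforce simp: topspace_Euclidean_space)
  moreover have "subtopology (Euclidean_space m) (disc m - disc_boundary m)
      = top_of_set (disc m - disc_boundary m)"
    using disc_subset_Euclidean_space[of m]
    by (subst Euclidean_space_eq_top_of_set) (simp add: subtopology_subtopology Int_absorb1 Diff_subset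
        order_trans[OF Diff_subset])
  ultimately show "continuous_map (subtopology (Euclidean_space m) (disc m - disc_boundary m))
      (Euclidean_space m) g"
    using continuous_on_subset[OF g_cont, of "disc m - disc_boundary m"]
    by (subst (2) Euclidean_space_eq_top_of_set)
       (auto simp: continuous_map_in_subtopology continuous_map_iff_continuous)
  show "inj_on g (disc m - disc_boundary m)"
    using g_inj by (rule inj_on_subset) blast
qed

lemma image_disc_interior_eq:
  obtains W where "open W" "g ` (disc m - disc_boundary m) = W \<inter> topspace (Euclidean_space m)"
  using openin_image_disc_interior
  by (subst (asm) Euclidean_space_eq_top_of_set) (auto simp: openin_open)

lemma disc_embedding_dim_eq: "n = m"
proof (rule ccontr)
  assume "n \<noteq> m"
  then have "n < m"
    using dim_le by simp
  obtain W where W: "open W" "g ` (disc m - disc_boundary m) = W \<inter> topspace (Euclidean_space m)"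
    using image_disc_interior_eq .
  define p where "p = g (\<lambda>i. 0)"
  have "(\<lambda>i. 0) \<in> disc m - disc_boundary m"
    by (simp add: disc_eq disc_boundary_eq sqnorm_def)
  then have p: "p \<in> W" "p \<in> disc n"
    using W g_maps unfolding p_def by blast+
  \<comment> \<open>Moving in direction \<open>n\<close> stays inside the open image but leaves \<open>disc n\<close>.\<close>
  define c where "c t = p(n := p n + t)" for t :: real
  have "continuous_on UNIV c"
    unfolding c_def fun_upd_def
  proof (intro continuous_on_coordinatewise_then_product)
    fix i
    show "continuous_on UNIV (\<lambda>t. if i = n then p n + t else p i)"
      by (cases "i = n") (auto intro!: continuous_intros)
  qed
  moreover have "c 0 \<in> W"
    using p by (simp add: c_def)
  ultimately obtain t where t: "t > 0" "c t \<in> W"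
    using continuous_curve_enters_open[OF W(1)] by blast
  have "c t \<in> topspace (Euclidean_space m)"
    using p \<open>n < m\<close> by (auto simp: c_def disc_eq topspace_Euclidean_space)
  with t W g_maps have "c t \<in> disc n"
    by blast
  then have "c t n = 0"
    by (simp add: disc_eq)
  moreover have "p n = 0"
    using p by (simp add: disc_eq)
  ultimately show False
    using t by (simp add: c_def)
qed

lemma disc_embedding_maps_interior:
  assumes x: "x \<in> disc m - disc_boundary m"
  shows "g x \<notin> disc_boundary n"
proof
  assume gx: "g x \<in> disc_boundary n"
  obtain W where W: "open W" "g ` (disc m - disc_boundary m) = W \<inter> topspace (Euclidean_space m)"
    using image_disc_interior_eq .
  \<comment> \<open>Pushing \<open>g x\<close> radially outwards stays inside the open image but leaves the disc.\<close>
  define c where "c t = (\<lambda>i. (1 + t) * g x i)" for t :: real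
  have "continuous_on UNIV c"
    unfolding c_def by (intro continuous_on_coordinatewise_then_product continuous_intros)
  moreover have "c 0 \<in> W"
    using W(2) x by (auto simp: c_def)
  ultimately obtain t where t: "t > 0" "c t \<in> W"
    using continuous_curve_enters_open[OF W(1)] by blast
  have "\<forall>i\<ge>m. g x i = 0"
    using gx disc_embedding_dim_eq by (simp add: disc_boundary_eq)
  then have "c t \<in> topspace (Euclidean_space m)"
    by (simp add: c_def topspace_Euclidean_space)
  with t W g_maps have "c t \<in> disc n"
    by blast
  then have "sqnorm n (c t) \<le> 1"
    by (simp add: disc_eq)
  moreover have "sqnorm n (c t) = (1 + t)\<^sup>2"
    using gx by (simp add: c_def sqnorm_scale disc_boundary_eq)
  moreover have "1 < (1 + t)\<^sup>2"
    using t by (simp add: power_strict_mono[of 1 "1 + t" 2, simplified])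
  ultimately show False
    by simp
qed

end

lemma homeomorphic_map_discD:
  assumes "homeomorphic_map (top_of_set (disc n)) (top_of_set (disc m)) f"
  shows "continuous_on (disc n) f" "inj_on f (disc n)" "f ` disc n = disc m"
  using homeomorphic_imp_continuous_map[OF assms] homeomorphic_imp_injective_map[OF assms]
    homeomorphic_imp_surjective_map[OF assms]
  by (auto simp: continuous_map_iff_continuous)

lemma homeomorphic_map_disc_boundary:
  assumes f: "homeomorphic_map (top_of_set (disc n)) (top_of_set (disc m)) f"
  shows "n = m" "f ` disc_boundary n = disc_boundary m"
proof -
  obtain g where "homeomorphic_maps (top_of_set (disc n)) (top_of_set (disc m)) f g"
    using f homeomorphic_map_maps by blast
  then have g: "homeomorphic_map (top_of_set (disc m)) (top_of_set (disc n)) g"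
    and gf: "\<forall>x\<in>disc n. g (f x) = x" and fg: "\<forall>y\<in>disc m. f (g y) = y"
    by (auto simp: homeomorphic_maps_map homeomorphic_maps_def)
  note f_props = homeomorphic_map_discD[OF f] and g_props = homeomorphic_map_discD[OF g]
  show dims: "n = m"
    using disc_embedding_dim_eq[where g=f and m=n and n=m] disc_embedding_dim_eq[where g=g and m=m and n=n]
      f_props g_props
    by (cases "n \<le> m") auto
  have f_int: "f x \<notin> disc_boundary m" if "x \<in> disc n - disc_boundary n" for x
    using disc_embedding_maps_interior[where g=f and m=n and n=m and x=x] f_props that dims by auto
  have g_int: "g y \<notin> disc_boundary n" if "y \<in> disc m - disc_boundary m" for y
    using disc_embedding_maps_interior[where g=g and m=m and n=n and x=y] g_props that dims by auto
  show "f ` disc_boundary n = disc_boundary m"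
  proof
    show "f ` disc_boundary n \<subseteq> disc_boundary m"
    proof (rule image_subsetI)
      fix x
      assume x: "x \<in> disc_boundary n"
      then have "x \<in> disc n"
        using disc_boundary_subset_disc by blast
      moreover have "g (f x) \<in> disc_boundary n"
        using x gf \<open>x \<in> disc n\<close> by simp
      ultimately show "f x \<in> disc_boundary m"
        using g_int[of "f x"] f_props(3) by blast
    qed
    show "disc_boundary m \<subseteq> f ` disc_boundary n"
    proof
      fix y
      assume y: "y \<in> disc_boundary m"
      then have y_disc: "y \<in> disc m"
        using disc_boundary_subset_disc by blast
      have "g y \<in> disc_boundary n"
      proof (rule ccontr)
        assume "g y \<notin> disc_boundary n"
        then have "f (g y) \<notin> disc_boundary m"
          using f_int g_props(3) y_disc by blast
        with y fg y_disc show False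
          by simp
      qed
      moreover have "y = f (g y)"
        using fg y_disc by simp
      ultimately show "y \<in> f ` disc_boundary n"
        by blast
    qed
  qed
qed

section \<open>Cells\<close>

lemma cell_param_iff:
  "cell_param X n \<sigma> \<alpha> \<longleftrightarrow>
     \<sigma> \<subseteq> topspace X \<and> homeomorphic_map (top_of_set (disc n)) (subtopology X \<sigma>) \<alpha>"
  by (simp add: cell_param_def subtopology_Euclidean_space_disc)

lemma
  assumes "cell_param X n \<sigma> \<alpha>"
  shows cell_param_image: "\<alpha> ` disc n = \<sigma>"
    and cell_param_inj: "inj_on \<alpha> (disc n)"
    and cell_param_continuous: "continuous_map (top_of_set (disc n)) X \<alpha>"
    and cell_param_compactin: "compactin X \<sigma>"
proof -
  have hom: "homeomorphic_map (top_of_set (disc n)) (subtopology X \<sigma>) \<alpha>"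
    and "\<sigma> \<subseteq> topspace X"
    using assms by (auto simp: cell_param_iff)
  then show image: "\<alpha> ` disc n = \<sigma>"
    using homeomorphic_imp_surjective_map[OF hom] by (simp add: inf.absorb2)
  show "inj_on \<alpha> (disc n)"
    using homeomorphic_imp_injective_map[OF hom] by simp
  show cont: "continuous_map (top_of_set (disc n)) X \<alpha>"
    using homeomorphic_imp_continuous_map[OF hom] by (simp add: continuous_map_in_subtopology)
  have "compactin (top_of_set (disc n)) (disc n)"
    using compact_disc by (simp add: compactin_subtopology)
  then show "compactin X \<sigma>"
    using image_compactin[OF _ cont] image by metis
qed

lemma cell_param_inverse:
  assumes "cell_param X n \<sigma> \<alpha>"
  obtains \<beta> where "\<And>x. x \<in> disc n \<Longrightarrow> \<beta> (\<alpha> x) = x" "\<And>y. y \<in> \<sigma> \<Longrightarrow> \<alpha> (\<beta> y) = y"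
    "\<And>y. y \<in> \<sigma> \<Longrightarrow> \<beta> y \<in> disc n"
    "continuous_map (subtopology X \<sigma>) (top_of_set (disc n)) \<beta>"
proof -
  have hom: "homeomorphic_map (top_of_set (disc n)) (subtopology X \<sigma>) \<alpha>"
    and \<sigma>: "\<sigma> \<subseteq> topspace X"
    using assms by (auto simp: cell_param_iff)
  obtain \<beta> where maps: "homeomorphic_maps (top_of_set (disc n)) (subtopology X \<sigma>) \<alpha> \<beta>"
    using hom homeomorphic_map_maps by blast
  have "continuous_map (subtopology X \<sigma>) (top_of_set (disc n)) \<beta>"
    using maps by (simp add: homeomorphic_maps_def)
  moreover from this have "\<beta> y \<in> disc n" if "y \<in> \<sigma>" for y
    using continuous_map_image_subset_topspace \<sigma> that by fastforce
  ultimately show thesis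
    using maps \<sigma> by (intro that) (auto simp: homeomorphic_maps_def inf.absorb2)
qed

lemma cell_param_unique:
  assumes \<alpha>: "cell_param X n \<sigma> \<alpha>" and \<beta>: "cell_param X m \<sigma> \<beta>"
  shows "n = m" "\<alpha> ` disc_boundary n = \<beta> ` disc_boundary m"
proof -
  obtain \<beta>' where \<beta>\<beta>': "\<And>y. y \<in> \<sigma> \<Longrightarrow> \<beta> (\<beta>' y) = y"
    and hom': "homeomorphic_map (subtopology X \<sigma>) (top_of_set (disc m)) \<beta>'"
  proof -
    have "homeomorphic_map (top_of_set (disc m)) (subtopology X \<sigma>) \<beta>" "\<sigma> \<subseteq> topspace X"
      using \<beta> by (auto simp: cell_param_iff)
    then obtain \<beta>' where "homeomorphic_maps (top_of_set (disc m)) (subtopology X \<sigma>) \<beta> \<beta>'"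
      using homeomorphic_map_maps by blast
    with \<open>\<sigma> \<subseteq> topspace X\<close> show thesis
      by (intro that) (auto simp: homeomorphic_maps_map homeomorphic_maps_def inf.absorb2)
  qed
  have "homeomorphic_map (top_of_set (disc n)) (top_of_set (disc m)) (\<beta>' \<circ> \<alpha>)"
    using \<alpha> hom' homeomorphic_map_compose by (auto simp: cell_param_iff)
  note transition = homeomorphic_map_disc_boundary[OF this]
  show "n = m"
    by (fact transition(1))
  have "\<beta> ` disc_boundary m = \<beta> ` (\<beta>' \<circ> \<alpha>) ` disc_boundary n"
    using transition(2) by simp
  also have "\<dots> = (\<lambda>x. \<beta> (\<beta>' (\<alpha> x))) ` disc_boundary n"
    by (simp add: image_comp comp_def)
  also have "\<dots> = \<alpha> ` disc_boundary n"
    using \<beta>\<beta>' cell_param_image[OF \<alpha>] disc_boundary_subset_disc by (intro image_cong) auto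
  finally show "\<alpha> ` disc_boundary n = \<beta> ` disc_boundary m"
    by simp
qed

lemma cell_boundary_eq:
  assumes "cell_param X n \<sigma> \<alpha>"
  shows "cell_boundary X \<sigma> = \<alpha> ` disc_boundary n"
proof -
  have "\<exists>m \<beta>. cell_param X m \<sigma> \<beta> \<and> cell_boundary X \<sigma> = \<beta> ` disc_boundary m"
    unfolding cell_boundary_def by (rule someI_ex) (use assms in blast)
  then show ?thesis
    using cell_param_unique[OF assms] by metis
qed

lemma cell_boundary_subset:
  assumes "is_cell X n \<sigma>"
  shows "cell_boundary X \<sigma> \<subseteq> \<sigma>"
  using assms cell_boundary_eq cell_param_image disc_boundary_subset_disc
  unfolding is_cell_def by blast

section \<open>Extending a boundary map over a cell\<close>

lemma image_Int_eq_if_preimage_eq: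
  assumes "{x \<in> D. f x \<in> T} = D \<inter> E" and "A \<subseteq> D"
  shows "f ` (A \<inter> E) = f ` A \<inter> T"
  using assms by blast

lemma continuous_on_cell_boundary_transition:
  assumes \<alpha>: "cell_param X n \<sigma> \<alpha>" and \<alpha>': "cell_param X' n' \<sigma>' \<alpha>'"
    and \<beta>'_cont: "continuous_map (subtopology X' \<sigma>') (top_of_set (disc n')) \<beta>'"
    and \<Phi>_cont: "continuous_map (subtopology X (cell_boundary X \<sigma>)) X' \<Phi>"
    and \<Phi>_img: "\<Phi> ` cell_boundary X \<sigma> = cell_boundary X' \<sigma>'"
  shows "continuous_on (disc_boundary n) (\<beta>' \<circ> \<Phi> \<circ> \<alpha>)"
proof -
  have "cell_boundary X \<sigma> = \<alpha> ` disc_boundary n" "cell_boundary X' \<sigma>' \<subseteq> \<sigma>'"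
    using cell_boundary_eq[OF \<alpha>] cell_boundary_eq[OF \<alpha>'] cell_param_image[OF \<alpha>']
      disc_boundary_subset_disc by blast+
  then have "continuous_map (top_of_set (disc_boundary n)) (subtopology X (cell_boundary X \<sigma>)) \<alpha>"
    and "continuous_map (subtopology X (cell_boundary X \<sigma>)) (subtopology X' \<sigma>') \<Phi>"
    using continuous_map_from_subtopology[OF cell_param_continuous[OF \<alpha>], of "disc_boundary n"]
      disc_boundary_subset_disc \<Phi>_cont \<Phi>_img
    by (auto simp: subtopology_subtopology Int_absorb1 continuous_map_in_subtopology)
  then have "continuous_map (top_of_set (disc_boundary n)) (top_of_set (disc n'))
      (\<beta>' \<circ> \<Phi> \<circ> \<alpha>)"
    using \<beta>'_cont by (metis continuous_map_compose comp_assoc)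
  then show ?thesis
    by (metis continuous_map_subtopology_eu)
qed

lemma cell_boundary_transition:
  assumes \<alpha>: "cell_param X n \<sigma> \<alpha>" and \<alpha>': "cell_param X' n' \<sigma>' \<alpha>'"
    and \<beta>'\<alpha>': "\<And>x. x \<in> disc n' \<Longrightarrow> \<beta>' (\<alpha>' x) = x"
    and \<alpha>'\<beta>': "\<And>y. y \<in> \<sigma>' \<Longrightarrow> \<alpha>' (\<beta>' y) = y"
    and \<Phi>_inj: "inj_on \<Phi> (cell_boundary X \<sigma>)"
    and \<Phi>_img: "\<Phi> ` cell_boundary X \<sigma> = cell_boundary X' \<sigma>'"
  shows "(\<beta>' \<circ> \<Phi> \<circ> \<alpha>) ` disc_boundary n = disc_boundary n'"
    and "inj_on (\<beta>' \<circ> \<Phi> \<circ> \<alpha>) (disc_boundary n)"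
    and "{x \<in> disc n. \<alpha> x \<in> Y} = disc n \<inter> coord_subspace k \<Longrightarrow>
      {x \<in> disc n'. \<alpha>' x \<in> Y'} = disc n' \<inter> coord_subspace k \<Longrightarrow>
      \<Phi> ` (cell_boundary X \<sigma> \<inter> Y) = cell_boundary X' \<sigma>' \<inter> Y' \<Longrightarrow>
      (\<beta>' \<circ> \<Phi> \<circ> \<alpha>) ` (disc_boundary n \<inter> coord_subspace k) = disc_boundary n' \<inter> coord_subspace k"
proof -
  have bd: "cell_boundary X \<sigma> = \<alpha> ` disc_boundary n"
    and bd': "cell_boundary X' \<sigma>' = \<alpha>' ` disc_boundary n'"
    using cell_boundary_eq \<alpha> \<alpha>' by blast+
  have \<beta>'_cancel: "\<beta>' ` \<alpha>' ` A = A" if "A \<subseteq> disc n'" for A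
    using \<beta>'\<alpha>' that by (force simp: image_comp)
  have "(\<beta>' \<circ> \<Phi> \<circ> \<alpha>) ` disc_boundary n = \<beta>' ` \<Phi> ` \<alpha> ` disc_boundary n"
    by (simp add: image_comp)
  also have "\<dots> = disc_boundary n'"
    using bd bd' \<Phi>_img \<beta>'_cancel disc_boundary_subset_disc by simp
  finally show "(\<beta>' \<circ> \<Phi> \<circ> \<alpha>) ` disc_boundary n = disc_boundary n'" .
  have "inj_on \<beta>' \<sigma>'"
    using \<alpha>'\<beta>' by (metis inj_onI)
  moreover have "\<Phi> ` \<alpha> ` disc_boundary n \<subseteq> \<sigma>'"
    using bd bd' \<Phi>_img cell_param_image[OF \<alpha>'] disc_boundary_subset_disc[of n']
    by (metis image_mono)
  ultimately have "inj_on \<beta>' (\<Phi> ` \<alpha> ` disc_boundary n)"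
    by (rule inj_on_subset)
  moreover have "inj_on \<alpha> (disc_boundary n)"
    using cell_param_inj[OF \<alpha>] disc_boundary_subset_disc by (rule inj_on_subset)
  ultimately show "inj_on (\<beta>' \<circ> \<Phi> \<circ> \<alpha>) (disc_boundary n)"
    using \<Phi>_inj bd by (metis comp_inj_on image_comp)
  assume Y: "{x \<in> disc n. \<alpha> x \<in> Y} = disc n \<inter> coord_subspace k"
    and Y': "{x \<in> disc n'. \<alpha>' x \<in> Y'} = disc n' \<inter> coord_subspace k"
    and \<Phi>_Y: "\<Phi> ` (cell_boundary X \<sigma> \<inter> Y) = cell_boundary X' \<sigma>' \<inter> Y'"
  have "(\<beta>' \<circ> \<Phi> \<circ> \<alpha>) ` (disc_boundary n \<inter> coord_subspace k)
      = \<beta>' ` \<Phi> ` \<alpha> ` (disc_boundary n \<inter> coord_subspace k)"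
    by (simp add: image_comp)
  also have "\<dots> = \<beta>' ` \<alpha>' ` (disc_boundary n' \<inter> coord_subspace k)"
    using image_Int_eq_if_preimage_eq[OF Y disc_boundary_subset_disc]
      image_Int_eq_if_preimage_eq[OF Y' disc_boundary_subset_disc] \<Phi>_Y bd bd' by simp
  also have "\<dots> = disc_boundary n' \<inter> coord_subspace k"
    by (rule \<beta>'_cancel) (use disc_boundary_subset_disc in blast)
  finally show "(\<beta>' \<circ> \<Phi> \<circ> \<alpha>) ` (disc_boundary n \<inter> coord_subspace k)
      = disc_boundary n' \<inter> coord_subspace k" .
qed

lemma image_Int_eq_if_conjugate:
  assumes conj: "\<And>x. x \<in> D \<Longrightarrow> \<Psi> (\<alpha> x) = \<alpha>' (g x)"
    and g_img: "g ` (D \<inter> E) = D' \<inter> E"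
    and Y: "{x \<in> D. \<alpha> x \<in> Y} = D \<inter> E" and Y': "{x \<in> D'. \<alpha>' x \<in> Y'} = D' \<inter> E"
  shows "\<Psi> ` (\<alpha> ` D \<inter> Y) = \<alpha>' ` D' \<inter> Y'"
proof -
  have "\<Psi> ` (\<alpha> ` D \<inter> Y) = \<Psi> ` \<alpha> ` (D \<inter> E)"
    using image_Int_eq_if_preimage_eq[OF Y order_refl] by simp
  also have "\<dots> = \<alpha>' ` g ` (D \<inter> E)"
    using conj by (force simp: image_comp)
  also have "\<dots> = \<alpha>' ` D' \<inter> Y'"
    using g_img image_Int_eq_if_preimage_eq[OF Y' order_refl] by simp
  finally show ?thesis .
qed

lemma cell_map_from_disc_map:
  assumes \<alpha>: "cell_param X n \<sigma> \<alpha>" and \<alpha>': "cell_param X' n' \<sigma>' \<alpha>'"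
    and g_cont: "continuous_on (disc n) g" and g_inj: "inj_on g (disc n)"
    and g_img: "g ` disc n = disc n'"
  obtains \<Psi> where "\<Psi> ` \<sigma> = \<sigma>'" "inj_on \<Psi> \<sigma>" "continuous_map (subtopology X \<sigma>) X' \<Psi>"
    "\<And>x. x \<in> disc n \<Longrightarrow> \<Psi> (\<alpha> x) = \<alpha>' (g x)"
proof -
  obtain \<beta> where \<beta>\<alpha>: "\<And>x. x \<in> disc n \<Longrightarrow> \<beta> (\<alpha> x) = x" and \<alpha>\<beta>: "\<And>y. y \<in> \<sigma> \<Longrightarrow> \<alpha> (\<beta> y) = y"
    and \<beta>_disc: "\<And>y. y \<in> \<sigma> \<Longrightarrow> \<beta> y \<in> disc n"
    and \<beta>_cont: "continuous_map (subtopology X \<sigma>) (top_of_set (disc n)) \<beta>"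
    by (rule cell_param_inverse[OF \<alpha>]) blast
  have \<beta>_img: "\<beta> ` \<sigma> = disc n"
    using \<beta>\<alpha> \<beta>_disc cell_param_image[OF \<alpha>] by force
  show thesis
  proof
    have "(\<alpha>' \<circ> g \<circ> \<beta>) ` \<sigma> = \<alpha>' ` g ` \<beta> ` \<sigma>"
      by (simp add: image_comp)
    then show "(\<alpha>' \<circ> g \<circ> \<beta>) ` \<sigma> = \<sigma>'"
      using \<beta>_img g_img cell_param_image[OF \<alpha>'] by simp
    have "inj_on \<beta> \<sigma>"
      using \<alpha>\<beta> by (metis inj_onI)
    moreover have "inj_on (\<alpha>' \<circ> g) (disc n)"
      using g_inj cell_param_inj[OF \<alpha>'] g_img by (simp add: comp_inj_on)
    ultimately show "inj_on (\<alpha>' \<circ> g \<circ> \<beta>) \<sigma>"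
      using \<beta>_img by (simp add: comp_inj_on)
    have "continuous_map (top_of_set (disc n)) (top_of_set (disc n')) g"
      using g_cont g_img by auto
    then show "continuous_map (subtopology X \<sigma>) X' (\<alpha>' \<circ> g \<circ> \<beta>)"
      using continuous_map_compose[OF continuous_map_compose[OF \<beta>_cont] cell_param_continuous[OF \<alpha>']]
      by (simp add: comp_assoc)
    show "(\<alpha>' \<circ> g \<circ> \<beta>) (\<alpha> x) = \<alpha>' (g x)" if "x \<in> disc n" for x
      using \<beta>\<alpha> that by simp
  qed
qed

lemma cell_boundary_map_extension:
  assumes \<alpha>: "cell_param X n \<sigma> \<alpha>" and \<alpha>': "cell_param X' n' \<sigma>' \<alpha>'"
    and \<Phi>_cont: "continuous_map (subtopology X (cell_boundary X \<sigma>)) X' \<Phi>"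
    and \<Phi>_inj: "inj_on \<Phi> (cell_boundary X \<sigma>)"
    and \<Phi>_img: "\<Phi> ` cell_boundary X \<sigma> = cell_boundary X' \<sigma>'"
  obtains \<Psi> where "\<Psi> ` \<sigma> = \<sigma>'" "inj_on \<Psi> \<sigma>" "continuous_map (subtopology X \<sigma>) X' \<Psi>"
    "\<And>x. x \<in> cell_boundary X \<sigma> \<Longrightarrow> \<Psi> x = \<Phi> x"
    "{x \<in> disc n. \<alpha> x \<in> Y} = disc n \<inter> coord_subspace k \<Longrightarrow>
       {x \<in> disc n'. \<alpha>' x \<in> Y'} = disc n' \<inter> coord_subspace k \<Longrightarrow>
       \<Phi> ` (cell_boundary X \<sigma> \<inter> Y) = cell_boundary X' \<sigma>' \<inter> Y' \<Longrightarrow> \<Psi> ` (\<sigma> \<inter> Y) = \<sigma>' \<inter> Y'"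
proof -
  obtain \<beta>' where \<beta>'\<alpha>': "\<And>x. x \<in> disc n' \<Longrightarrow> \<beta>' (\<alpha>' x) = x"
    and \<alpha>'\<beta>': "\<And>y. y \<in> \<sigma>' \<Longrightarrow> \<alpha>' (\<beta>' y) = y"
    and \<beta>'_cont: "continuous_map (subtopology X' \<sigma>') (top_of_set (disc n')) \<beta>'"
    by (rule cell_param_inverse[OF \<alpha>']) blast
  let ?h = "\<beta>' \<circ> \<Phi> \<circ> \<alpha>"
  note h = cell_boundary_transition[OF \<alpha> \<alpha>' \<beta>'\<alpha>' \<alpha>'\<beta>' \<Phi>_inj \<Phi>_img]
  define g where "g = radial_extension n ?h"
  have "continuous_on (disc n) g"
    unfolding g_def using h(1) continuous_on_cell_boundary_transition[OF \<alpha> \<alpha>' \<beta>'_cont \<Phi>_cont \<Phi>_img]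
    by (rule continuous_on_radial_extension)
  moreover have "inj_on g (disc n)"
    unfolding g_def by (rule inj_on_radial_extension[OF h(1,2)])
  moreover have "g ` disc n = disc n'"
    unfolding g_def by (rule radial_extension_image[OF h(1)])
  ultimately obtain \<Psi> where \<Psi>: "\<Psi> ` \<sigma> = \<sigma>'" "inj_on \<Psi> \<sigma>" "continuous_map (subtopology X \<sigma>) X' \<Psi>"
    and \<Psi>\<alpha>: "\<And>x. x \<in> disc n \<Longrightarrow> \<Psi> (\<alpha> x) = \<alpha>' (g x)"
    by (rule cell_map_from_disc_map[OF \<alpha> \<alpha>']) blast
  show thesis
  proof (rule that[OF \<Psi>])
    show "\<Psi> x = \<Phi> x" if x: "x \<in> cell_boundary X \<sigma>" for x
    proof -
      obtain s where s: "s \<in> disc_boundary n" "x = \<alpha> s"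
        using x cell_boundary_eq[OF \<alpha>] by blast
      then have "\<Psi> x = \<alpha>' (\<beta>' (\<Phi> x))"
        using \<Psi>\<alpha>[OF subsetD[OF disc_boundary_subset_disc s(1)]]
          radial_extension_eq_on_boundary[OF h(1) s(1)]
        by (simp add: g_def)
      moreover have "\<Phi> x \<in> \<sigma>'"
        using x \<Phi>_img cell_boundary_subset[of X' n' \<sigma>'] \<alpha>' by (auto simp: is_cell_def)
      ultimately show ?thesis
        using \<alpha>'\<beta>' by simp
    qed
    assume Y: "{x \<in> disc n. \<alpha> x \<in> Y} = disc n \<inter> coord_subspace k"
      and Y': "{x \<in> disc n'. \<alpha>' x \<in> Y'} = disc n' \<inter> coord_subspace k"
      and "\<Phi> ` (cell_boundary X \<sigma> \<inter> Y) = cell_boundary X' \<sigma>' \<inter> Y'"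
    then have "g ` (disc n \<inter> coord_subspace k) = disc n' \<inter> coord_subspace k"
      unfolding g_def using radial_extension_coord_subspace[OF h(1,2) h(3)] by blast
    from image_Int_eq_if_conjugate[where D="disc n" and D'="disc n'", OF \<Psi>\<alpha> this Y Y']
    show "\<Psi> ` (\<sigma> \<inter> Y) = \<sigma>' \<inter> Y'"
      using cell_param_image[OF \<alpha>] cell_param_image[OF \<alpha>'] by simp
  qed
qed

section \<open>Finite regular CW complexes\<close>

lemma continuous_map_on_Union_closedin:
  assumes "finite \<C>" and "\<And>T. T \<in> \<C> \<Longrightarrow> closedin X T"
    and "\<And>T. T \<in> \<C> \<Longrightarrow> continuous_map (subtopology X T) X' f"
  shows "continuous_map (subtopology X (\<Union>\<C>)) X' f"
proof (rule pasting_lemma_closed[where I=\<C> and T="\<lambda>T. T" and f="\<lambda>_. f"])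
  fix T
  assume T: "T \<in> \<C>"
  show "closedin (subtopology X (\<Union>\<C>)) T"
    using assms(2)[OF T] T by (metis Sup_upper closedin_subset_topspace)
  show "continuous_map (subtopology (subtopology X (\<Union>\<C>)) T) X' f"
    using assms(3)[OF T] T by (simp add: subtopology_subtopology Int_absorb1 Sup_upper)
qed (use assms(1) in auto)

lemma cell_interior_subset: "cell_interior X \<sigma> \<subseteq> \<sigma>"
  by (auto simp: cell_interior_def)

locale regular_CW_complex =
  fixes X :: "'a topology" and \<X> :: "'a set set"
  assumes regular_CW: "finite_regular_CW X \<X>"
begin

lemma finite_cells: "finite \<X>"
  and Hausdorff: "Hausdorff_space X"
  and cell_is_cell: "\<sigma> \<in> \<X> \<Longrightarrow> \<exists>n. is_cell X n \<sigma>"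
  and cell_interiors_cover: "(\<Union>\<sigma>\<in>\<X>. cell_interior X \<sigma>) = topspace X"
  and cell_interiors_disjoint:
    "\<sigma> \<in> \<X> \<Longrightarrow> \<tau> \<in> \<X> \<Longrightarrow> \<sigma> \<noteq> \<tau> \<Longrightarrow> cell_interior X \<sigma> \<inter> cell_interior X \<tau> = {}"
  and cell_boundary_lower_cells:
    "\<sigma> \<in> \<X> \<Longrightarrow> \<exists>\<C>\<subseteq>\<X>. (\<forall>\<tau>\<in>\<C>. cell_dim X \<tau> < cell_dim X \<sigma>) \<and> cell_boundary X \<sigma> = \<Union>\<C>"
  using regular_CW by (simp_all add: finite_regular_CW_def)

lemma cell_boundary_subset_cell: "\<sigma> \<in> \<X> \<Longrightarrow> cell_boundary X \<sigma> \<subseteq> \<sigma>"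
  using cell_is_cell cell_boundary_subset by blast

lemma cell_subset_topspace: "\<sigma> \<in> \<X> \<Longrightarrow> \<sigma> \<subseteq> topspace X"
  using cell_is_cell cell_param_def is_cell_def by metis

lemma compactin_cell: "\<sigma> \<in> \<X> \<Longrightarrow> compactin X \<sigma>"
  using cell_is_cell cell_param_compactin is_cell_def by metis

lemma closedin_cell: "\<sigma> \<in> \<X> \<Longrightarrow> closedin X \<sigma>"
  using compactin_cell Hausdorff compactin_imp_closedin by blast

lemma exists_cell_interior:
  assumes "x \<in> topspace X"
  obtains \<rho> where "\<rho> \<in> \<X>" "x \<in> cell_interior X \<rho>"
  using assms cell_interiors_cover by blast

lemma Union_cells: "\<Union>\<X> = topspace X"
proof
  show "\<Union>\<X> \<subseteq> topspace X"
    using cell_subset_topspace by blast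
  show "topspace X \<subseteq> \<Union>\<X>"
  proof
    fix x
    assume "x \<in> topspace X"
    then obtain \<rho> where "\<rho> \<in> \<X>" "x \<in> cell_interior X \<rho>"
      by (rule exists_cell_interior)
    then show "x \<in> \<Union>\<X>"
      using cell_interior_subset[of X \<rho>] by blast
  qed
qed

lemma compact_space: "compact_space X"
  using compactin_Union[OF finite_cells compactin_cell] Union_cells
  by (simp add: compact_space_def)

lemma cell_subset_if_interior_meets:
  assumes "\<sigma> \<in> \<X>" "\<rho> \<in> \<X>" "cell_interior X \<rho> \<inter> \<sigma> \<noteq> {}"
  shows "\<rho> \<subseteq> \<sigma>"
  using assms
proof (induction "cell_dim X \<sigma>" arbitrary: \<sigma> rule: less_induct)
  case less
  then obtain x where x: "x \<in> cell_interior X \<rho>" "x \<in> \<sigma>"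
    by blast
  show ?case
  proof (cases "x \<in> cell_interior X \<sigma>")
    case True
    then have "\<rho> = \<sigma>"
      using cell_interiors_disjoint[OF less.prems(2,1)] x by blast
    then show ?thesis
      by simp
  next
    case False
    obtain \<C> where \<C>: "\<C> \<subseteq> \<X>" "\<forall>\<tau>\<in>\<C>. cell_dim X \<tau> < cell_dim X \<sigma>" "cell_boundary X \<sigma> = \<Union>\<C>"
      using cell_boundary_lower_cells[OF less.prems(1)] by blast
    then obtain \<tau> where "\<tau> \<in> \<C>" "x \<in> \<tau>"
      using False x by (auto simp: cell_interior_def)
    then have "\<rho> \<subseteq> \<tau>"
      using less.hyps[of \<tau>] \<C> x less.prems(2) by blast
    moreover have "\<tau> \<subseteq> \<sigma>"
      using \<C>(3) \<open>\<tau> \<in> \<C>\<close> cell_boundary_subset_cell[OF less.prems(1)] by blast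
    ultimately show ?thesis
      by blast
  qed
qed

lemma cell_boundary_eq_Union_proper_faces:
  assumes \<sigma>: "\<sigma> \<in> \<X>"
  shows "cell_boundary X \<sigma> = \<Union>{\<tau> \<in> \<X>. \<tau> \<subset> \<sigma>}"
proof
  obtain \<C> where \<C>: "\<C> \<subseteq> \<X>" "\<forall>\<tau>\<in>\<C>. cell_dim X \<tau> < cell_dim X \<sigma>" "cell_boundary X \<sigma> = \<Union>\<C>"
    using cell_boundary_lower_cells[OF \<sigma>] by blast
  have "\<tau> \<subset> \<sigma>" if "\<tau> \<in> \<C>" for \<tau>
    using that \<C> cell_boundary_subset_cell[OF \<sigma>] by blast
  then show "cell_boundary X \<sigma> \<subseteq> \<Union>{\<tau> \<in> \<X>. \<tau> \<subset> \<sigma>}"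
    using \<C> by blast
  show "\<Union>{\<tau> \<in> \<X>. \<tau> \<subset> \<sigma>} \<subseteq> cell_boundary X \<sigma>"
  proof
    fix y
    assume "y \<in> \<Union>{\<tau> \<in> \<X>. \<tau> \<subset> \<sigma>}"
    then obtain \<tau> where \<tau>: "\<tau> \<in> \<X>" "\<tau> \<subset> \<sigma>" "y \<in> \<tau>"
      by blast
    then have "y \<in> topspace X"
      using cell_subset_topspace by blast
    then obtain \<rho> where \<rho>: "\<rho> \<in> \<X>" "y \<in> cell_interior X \<rho>"
      by (rule exists_cell_interior)
    then have "\<rho> \<subseteq> \<tau>"
      using cell_subset_if_interior_meets[OF \<tau>(1)] \<tau>(3) by blast
    then have "y \<notin> cell_interior X \<sigma>"
      using cell_interiors_disjoint[OF \<rho>(1) \<sigma>] \<rho>(2) \<tau>(2) by blast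
    then show "y \<in> cell_boundary X \<sigma>"
      using \<tau> by (auto simp: cell_interior_def)
  qed
qed

end

section \<open>Cellular homeomorphisms of regular CW pairs\<close>

lemma standard_pair_param:
  assumes "standard_pair X k (\<sigma> \<inter> T) \<sigma>"
  obtains n \<alpha> where "cell_param X n \<sigma> \<alpha>" "{x \<in> disc n. \<alpha> x \<in> T} = disc n \<inter> coord_subspace k"
proof -
  obtain n \<alpha> where \<alpha>: "cell_param X n \<sigma> \<alpha>"
    and std: "{x \<in> disc n. \<alpha> x \<in> \<sigma> \<inter> T} = {x \<in> disc n. \<forall>i<k. x i = 0}"
    using assms unfolding standard_pair_def by blast
  have "{x \<in> disc n. \<alpha> x \<in> T} = {x \<in> disc n. \<alpha> x \<in> \<sigma> \<inter> T}"
    using cell_param_image[OF \<alpha>] by blast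
  with std have "{x \<in> disc n. \<alpha> x \<in> T} = disc n \<inter> coord_subspace k"
    by (auto simp: coord_subspace_def)
  with \<alpha> show thesis
    by (rule that)
qed

locale regular_CW_pair_iso =
  fixes X :: "'a topology" and \<X> :: "'a set set" and Y :: "'a set"
    and X' :: "'b topology" and \<X>' :: "'b set set" and Y' :: "'b set"
    and k :: nat and \<phi> :: "'a set \<Rightarrow> 'b set"
  assumes pair: "finite_regular_CW_pair X \<X> Y k"
    and pair': "finite_regular_CW_pair X' \<X>' Y' k"
    and iso: "poset_iso \<phi> \<X> \<X>'"
    and meeting_cells: "\<phi> ` cells_meeting \<X> Y = cells_meeting \<X>' Y'"
begin

sublocale CW: regular_CW_complex X \<X>
  using pair by unfold_locales (simp add: finite_regular_CW_pair_def)

sublocale CW': regular_CW_complex X' \<X>'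
  using pair' by unfold_locales (simp add: finite_regular_CW_pair_def)

lemma \<phi>_bij: "bij_betw \<phi> \<X> \<X>'"
  and \<phi>_mono_iff: "\<sigma> \<in> \<X> \<Longrightarrow> \<tau> \<in> \<X> \<Longrightarrow> \<sigma> \<subseteq> \<tau> \<longleftrightarrow> \<phi> \<sigma> \<subseteq> \<phi> \<tau>"
  using iso by (simp_all add: poset_iso_def)

lemma \<phi>_in: "\<sigma> \<in> \<X> \<Longrightarrow> \<phi> \<sigma> \<in> \<X>'"
  using \<phi>_bij bij_betwE by blast

lemma \<phi>_inj: "\<sigma> \<in> \<X> \<Longrightarrow> \<tau> \<in> \<X> \<Longrightarrow> \<phi> \<sigma> = \<phi> \<tau> \<Longrightarrow> \<sigma> = \<tau>"
  using \<phi>_bij by (metis bij_betw_def inj_onD)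

lemma \<phi>_proper_faces: "\<sigma> \<in> \<X> \<Longrightarrow> \<phi> ` {\<tau> \<in> \<X>. \<tau> \<subset> \<sigma>} = {\<tau>' \<in> \<X>'. \<tau>' \<subset> \<phi> \<sigma>}"
  using \<phi>_bij \<phi>_mono_iff \<phi>_inj unfolding bij_betw_def by (auto simp: image_iff) blast

lemma \<phi>_meets_iff:
  assumes \<sigma>: "\<sigma> \<in> \<X>"
  shows "\<phi> \<sigma> \<inter> Y' = {} \<longleftrightarrow> \<sigma> \<inter> Y = {}"
proof -
  have "\<phi> \<sigma> \<in> \<phi> ` cells_meeting \<X> Y \<longleftrightarrow> \<sigma> \<in> cells_meeting \<X> Y"
    using \<sigma> \<phi>_inj by (auto simp: cells_meeting_def)
  then show ?thesis
    using \<sigma> \<phi>_in meeting_cells by (simp add: cells_meeting_def)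
qed

text \<open>The interior clause is what makes maps that are compatible on several cells injective
  on their union.\<close>

definition cell_compatible :: "'a set \<Rightarrow> ('a \<Rightarrow> 'b) \<Rightarrow> bool" where
  "cell_compatible \<sigma> \<Phi> \<longleftrightarrow>
     \<Phi> ` \<sigma> = \<phi> \<sigma> \<and> inj_on \<Phi> \<sigma> \<and> continuous_map (subtopology X \<sigma>) X' \<Phi> \<and>
     \<Phi> ` (\<sigma> \<inter> Y) = \<phi> \<sigma> \<inter> Y' \<and> \<Phi> ` cell_interior X \<sigma> = cell_interior X' (\<phi> \<sigma>)"

lemma cell_compatible_cong:
  assumes "cell_compatible \<sigma> \<Phi>" and "\<And>x. x \<in> \<sigma> \<Longrightarrow> \<Phi> x = \<Psi> x"
  shows "cell_compatible \<sigma> \<Psi>"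
proof -
  have "\<Psi> ` \<sigma> = \<Phi> ` \<sigma>" "\<Psi> ` (\<sigma> \<inter> Y) = \<Phi> ` (\<sigma> \<inter> Y)"
    "\<Psi> ` cell_interior X \<sigma> = \<Phi> ` cell_interior X \<sigma>"
    using assms(2) cell_interior_subset[of X \<sigma>] by (auto intro!: image_cong)
  moreover have "inj_on \<Psi> \<sigma>"
    using assms inj_on_cong[of \<sigma> \<Phi> \<Psi>] by (simp add: cell_compatible_def)
  moreover have "continuous_map (subtopology X \<sigma>) X' \<Psi>"
    using assms by (auto simp: cell_compatible_def intro: continuous_map_eq)
  ultimately show ?thesis
    using assms(1) by (simp add: cell_compatible_def)
qed

definition downclosed :: "'a set set \<Rightarrow> bool" where
  "downclosed S \<longleftrightarrow> S \<subseteq> \<X> \<and> (\<forall>\<sigma>\<in>S. \<forall>\<tau>\<in>\<X>. \<tau> \<subseteq> \<sigma> \<longrightarrow> \<tau> \<in> S)"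

lemma inj_on_Union_downclosed:
  assumes S: "downclosed S" and compatible: "\<And>\<sigma>. \<sigma> \<in> S \<Longrightarrow> cell_compatible \<sigma> \<Phi>"
  shows "inj_on \<Phi> (\<Union>S)"
proof (rule inj_onI)
  have interior_cell: "\<exists>\<rho>\<in>S. z \<in> cell_interior X \<rho>" if z: "z \<in> \<Union>S" for z
  proof -
    obtain \<tau> where \<tau>: "\<tau> \<in> S" "z \<in> \<tau>" "\<tau> \<in> \<X>"
      using z S by (auto simp: downclosed_def)
    then obtain \<rho> where \<rho>: "\<rho> \<in> \<X>" "z \<in> cell_interior X \<rho>"
      using CW.cell_subset_topspace CW.exists_cell_interior by blast
    then have "\<rho> \<subseteq> \<tau>"
      using CW.cell_subset_if_interior_meets[OF \<tau>(3)] \<tau>(2) by blast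
    with \<rho> \<tau> S show ?thesis
      unfolding downclosed_def by blast
  qed
  fix x y
  assume "x \<in> \<Union>S" "y \<in> \<Union>S" and eq: "\<Phi> x = \<Phi> y"
  then obtain \<rho>1 \<rho>2 where \<rho>: "\<rho>1 \<in> S" "x \<in> cell_interior X \<rho>1" "\<rho>2 \<in> S" "y \<in> cell_interior X \<rho>2"
    using interior_cell by meson
  have in_X: "\<rho>1 \<in> \<X>" "\<rho>2 \<in> \<X>"
    using \<rho> S by (auto simp: downclosed_def)
  have "\<Phi> x \<in> cell_interior X' (\<phi> \<rho>1)" "\<Phi> y \<in> cell_interior X' (\<phi> \<rho>2)"
    using compatible \<rho> unfolding cell_compatible_def by blast+
  then have "cell_interior X' (\<phi> \<rho>1) \<inter> cell_interior X' (\<phi> \<rho>2) \<noteq> {}"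
    using eq by auto
  then have "\<phi> \<rho>1 = \<phi> \<rho>2"
    using CW'.cell_interiors_disjoint[OF \<phi>_in[OF in_X(1)] \<phi>_in[OF in_X(2)]] by blast
  then have "\<rho>1 = \<rho>2"
    using \<phi>_inj in_X by blast
  moreover have "inj_on \<Phi> \<rho>1"
    using compatible \<rho>(1) by (simp add: cell_compatible_def)
  ultimately show "x = y"
    using \<rho> eq cell_interior_subset by (metis inj_onD subsetD)
qed

lemma standard_cell_params:
  assumes \<sigma>: "\<sigma> \<in> \<X>"
  obtains n \<alpha> n' \<alpha>' where "cell_param X n \<sigma> \<alpha>" "cell_param X' n' (\<phi> \<sigma>) \<alpha>'"
    "\<sigma> \<inter> Y = {} \<and> \<phi> \<sigma> \<inter> Y' = {} \<or>
     {x \<in> disc n. \<alpha> x \<in> Y} = disc n \<inter> coord_subspace k \<and>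
     {x \<in> disc n'. \<alpha>' x \<in> Y'} = disc n' \<inter> coord_subspace k"
proof (cases "\<sigma> \<inter> Y = {}")
  case True
  obtain n \<alpha> n' \<alpha>' where "cell_param X n \<sigma> \<alpha>" "cell_param X' n' (\<phi> \<sigma>) \<alpha>'"
    using CW.cell_is_cell[OF \<sigma>] CW'.cell_is_cell[OF \<phi>_in[OF \<sigma>]] by (auto simp: is_cell_def)
  with True show thesis
    using that \<phi>_meets_iff[OF \<sigma>] by blast
next
  case False
  have "standard_pair X k (\<sigma> \<inter> Y) \<sigma>" "standard_pair X' k (\<phi> \<sigma> \<inter> Y') (\<phi> \<sigma>)"
    using pair pair' \<sigma> \<phi>_in[OF \<sigma>] False \<phi>_meets_iff[OF \<sigma>]
    unfolding finite_regular_CW_pair_def by blast+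
  obtain n \<alpha> where "cell_param X n \<sigma> \<alpha>" "{x \<in> disc n. \<alpha> x \<in> Y} = disc n \<inter> coord_subspace k"
    by (rule standard_pair_param[OF \<open>standard_pair X k (\<sigma> \<inter> Y) \<sigma>\<close>])
  moreover obtain n' \<alpha>' where "cell_param X' n' (\<phi> \<sigma>) \<alpha>'"
    "{x \<in> disc n'. \<alpha>' x \<in> Y'} = disc n' \<inter> coord_subspace k"
    by (rule standard_pair_param[OF \<open>standard_pair X' k (\<phi> \<sigma> \<inter> Y') (\<phi> \<sigma>)\<close>])
  ultimately show thesis
    using that by blast
qed

lemma compatible_on_cell_boundary:
  assumes \<sigma>: "\<sigma> \<in> \<X>" and faces: "\<And>\<tau>. \<tau> \<in> \<X> \<Longrightarrow> \<tau> \<subset> \<sigma> \<Longrightarrow> cell_compatible \<tau> \<Phi>"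
  shows "\<Phi> ` cell_boundary X \<sigma> = cell_boundary X' (\<phi> \<sigma>)"
    and "\<Phi> ` (cell_boundary X \<sigma> \<inter> Y) = cell_boundary X' (\<phi> \<sigma>) \<inter> Y'"
    and "inj_on \<Phi> (cell_boundary X \<sigma>)"
    and "continuous_map (subtopology X (cell_boundary X \<sigma>)) X' \<Phi>"
proof -
  define F where "F = {\<tau> \<in> \<X>. \<tau> \<subset> \<sigma>}"
  have compatible: "\<And>\<tau>. \<tau> \<in> F \<Longrightarrow> cell_compatible \<tau> \<Phi>"
    using faces by (simp add: F_def)
  have bd: "cell_boundary X \<sigma> = \<Union>F"
    using CW.cell_boundary_eq_Union_proper_faces[OF \<sigma>] by (simp add: F_def)
  have bd': "cell_boundary X' (\<phi> \<sigma>) = (\<Union>\<tau>\<in>F. \<phi> \<tau>)"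
    using CW'.cell_boundary_eq_Union_proper_faces[OF \<phi>_in[OF \<sigma>]] \<phi>_proper_faces[OF \<sigma>]
    by (simp add: F_def)
  have "\<Phi> ` cell_boundary X \<sigma> = (\<Union>\<tau>\<in>F. \<Phi> ` \<tau>)"
    by (simp add: bd image_Union)
  also have "\<dots> = cell_boundary X' (\<phi> \<sigma>)"
    unfolding bd' using compatible by (intro SUP_cong) (simp_all add: cell_compatible_def)
  finally show "\<Phi> ` cell_boundary X \<sigma> = cell_boundary X' (\<phi> \<sigma>)" .
  have "\<Phi> ` (cell_boundary X \<sigma> \<inter> Y) = (\<Union>\<tau>\<in>F. \<Phi> ` (\<tau> \<inter> Y))"
    by (auto simp: bd)
  also have "\<dots> = (\<Union>\<tau>\<in>F. \<phi> \<tau> \<inter> Y')"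
    using compatible by (intro SUP_cong) (simp_all add: cell_compatible_def)
  also have "\<dots> = cell_boundary X' (\<phi> \<sigma>) \<inter> Y'"
    by (auto simp: bd')
  finally show "\<Phi> ` (cell_boundary X \<sigma> \<inter> Y) = cell_boundary X' (\<phi> \<sigma>) \<inter> Y'" .
  show "inj_on \<Phi> (cell_boundary X \<sigma>)"
    unfolding bd
    by (rule inj_on_Union_downclosed[OF _ compatible]) (auto simp: downclosed_def F_def)
  show "continuous_map (subtopology X (cell_boundary X \<sigma>)) X' \<Phi>"
    unfolding bd using CW.finite_cells CW.closedin_cell compatible
    by (intro continuous_map_on_Union_closedin) (auto simp: F_def cell_compatible_def)
qed

lemma extend_compatible_to_cell:
  assumes \<sigma>: "\<sigma> \<in> \<X>" and faces: "\<And>\<tau>. \<tau> \<in> \<X> \<Longrightarrow> \<tau> \<subset> \<sigma> \<Longrightarrow> cell_compatible \<tau> \<Phi>"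
  obtains \<Psi> where "cell_compatible \<sigma> \<Psi>" "\<And>x. x \<in> cell_boundary X \<sigma> \<Longrightarrow> \<Psi> x = \<Phi> x"
proof -
  note boundary = compatible_on_cell_boundary[OF \<sigma> faces]
  obtain n \<alpha> n' \<alpha>' where \<alpha>: "cell_param X n \<sigma> \<alpha>" and \<alpha>': "cell_param X' n' (\<phi> \<sigma>) \<alpha>'"
    and Y: "\<sigma> \<inter> Y = {} \<and> \<phi> \<sigma> \<inter> Y' = {} \<or>
       {x \<in> disc n. \<alpha> x \<in> Y} = disc n \<inter> coord_subspace k \<and>
       {x \<in> disc n'. \<alpha>' x \<in> Y'} = disc n' \<inter> coord_subspace k"
    using standard_cell_params[OF \<sigma>] by blast
  obtain \<Psi> where \<Psi>: "\<Psi> ` \<sigma> = \<phi> \<sigma>" "inj_on \<Psi> \<sigma>" "continuous_map (subtopology X \<sigma>) X' \<Psi>"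
    and \<Psi>_bd: "\<And>x. x \<in> cell_boundary X \<sigma> \<Longrightarrow> \<Psi> x = \<Phi> x"
    and \<Psi>_Y: "{x \<in> disc n. \<alpha> x \<in> Y} = disc n \<inter> coord_subspace k \<Longrightarrow>
       {x \<in> disc n'. \<alpha>' x \<in> Y'} = disc n' \<inter> coord_subspace k \<Longrightarrow>
       \<Phi> ` (cell_boundary X \<sigma> \<inter> Y) = cell_boundary X' (\<phi> \<sigma>) \<inter> Y' \<Longrightarrow>
       \<Psi> ` (\<sigma> \<inter> Y) = \<phi> \<sigma> \<inter> Y'"
    using cell_boundary_map_extension[OF \<alpha> \<alpha>' boundary(4,3,1), where Y=Y and Y'=Y' and k=k]
    by blast
  have "\<Psi> ` (\<sigma> \<inter> Y) = \<phi> \<sigma> \<inter> Y'"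
    using Y \<Psi>_Y boundary(2) by auto
  moreover have "\<Psi> ` cell_interior X \<sigma> = cell_interior X' (\<phi> \<sigma>)"
  proof -
    have "\<Psi> ` cell_boundary X \<sigma> = cell_boundary X' (\<phi> \<sigma>)"
      using \<Psi>_bd boundary(1) by (metis image_cong)
    then show ?thesis
      using \<Psi>(1,2) CW.cell_boundary_subset_cell[OF \<sigma>]
      by (simp add: cell_interior_def inj_on_image_set_diff)
  qed
  ultimately show thesis
    using that \<Psi> \<Psi>_bd by (simp add: cell_compatible_def)
qed

end

context regular_CW_pair_iso
begin

lemma downclosed_remove_maximal:
  assumes "downclosed S" "\<sigma> \<in> S" "\<forall>\<tau>\<in>S. \<sigma> \<subseteq> \<tau> \<longrightarrow> \<sigma> = \<tau>"
  shows "downclosed (S - {\<sigma>})"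
  using assms unfolding downclosed_def by blast

lemma compatible_map_on_downclosed:
  assumes "downclosed S"
  shows "\<exists>\<Phi>. \<forall>\<sigma>\<in>S. cell_compatible \<sigma> \<Phi>"
  using assms
proof (induction "card S" arbitrary: S rule: less_induct)
  case less
  show ?case
  proof (cases "S = {}")
    case False
    have "S \<subseteq> \<X>"
      using less.prems by (simp add: downclosed_def)
    then have "finite S"
      using CW.finite_cells finite_subset by blast
    then obtain \<sigma> where \<sigma>: "\<sigma> \<in> S" "\<forall>\<tau>\<in>S. \<sigma> \<subseteq> \<tau> \<longrightarrow> \<sigma> = \<tau>"
      using finite_has_maximal[OF _ False] by blast
    then have "\<sigma> \<in> \<X>"
      using \<open>S \<subseteq> \<X>\<close> by blast
    obtain \<Phi> where \<Phi>: "\<forall>\<rho>\<in>S - {\<sigma>}. cell_compatible \<rho> \<Phi>"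
      using less.hyps[OF _ downclosed_remove_maximal[OF less.prems \<sigma>]] card_Diff1_less[OF \<open>finite S\<close> \<sigma>(1)]
      by blast
    have "cell_compatible \<tau> \<Phi>" if "\<tau> \<in> \<X>" "\<tau> \<subset> \<sigma>" for \<tau>
      using \<Phi> less.prems \<sigma>(1) that unfolding downclosed_def by blast
    then obtain \<Psi> where \<Psi>: "cell_compatible \<sigma> \<Psi>"
      and \<Psi>_bd: "\<And>x. x \<in> cell_boundary X \<sigma> \<Longrightarrow> \<Psi> x = \<Phi> x"
      using extend_compatible_to_cell[OF \<open>\<sigma> \<in> \<X>\<close>] by blast
    \<comment> \<open>The interior of \<sigma> meets no other cell of S, so the new map may be glued in there.\<close>
    define \<Phi>' where "\<Phi>' x = (if x \<in> cell_interior X \<sigma> then \<Psi> x else \<Phi> x)" for x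
    have "cell_compatible \<sigma> \<Phi>'"
      using \<Psi> by (rule cell_compatible_cong) (use \<Psi>_bd in \<open>auto simp: \<Phi>'_def cell_interior_def\<close>)
    moreover have "cell_compatible \<rho> \<Phi>'" if \<rho>: "\<rho> \<in> S - {\<sigma>}" for \<rho>
    proof (rule cell_compatible_cong)
      show "cell_compatible \<rho> \<Phi>"
        using \<Phi> \<rho> by blast
      have "\<rho> \<in> \<X>"
        using \<rho> \<open>S \<subseteq> \<X>\<close> by blast
      then have "cell_interior X \<sigma> \<inter> \<rho> = {}"
        using CW.cell_subset_if_interior_meets[OF _ \<open>\<sigma> \<in> \<X>\<close>] \<sigma>(2) \<rho> by blast
      then show "\<Phi> x = \<Phi>' x" if "x \<in> \<rho>" for x
        using that by (auto simp: \<Phi>'_def)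
    qed
    ultimately show ?thesis
      by blast
  qed simp
qed

theorem cellular_homeomorphism:
  "\<exists>\<Phi>. homeomorphic_map X X' \<Phi> \<and> (\<forall>\<sigma>\<in>\<X>. \<Phi> ` \<sigma> = \<phi> \<sigma>) \<and> \<Phi> ` Y = Y'"
proof -
  obtain \<Phi> where \<Phi>: "\<And>\<sigma>. \<sigma> \<in> \<X> \<Longrightarrow> cell_compatible \<sigma> \<Phi>"
    using compatible_map_on_downclosed[of \<X>] by (auto simp: downclosed_def)
  then have cells: "\<Phi> ` \<sigma> = \<phi> \<sigma>" "\<Phi> ` (\<sigma> \<inter> Y) = \<phi> \<sigma> \<inter> Y'"
    "continuous_map (subtopology X \<sigma>) X' \<Phi>" if "\<sigma> \<in> \<X>" for \<sigma>
    using \<Phi>[OF that] by (simp_all add: cell_compatible_def)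
  have \<phi>_onto: "\<phi> ` \<X> = \<X>'"
    using \<phi>_bij by (simp add: bij_betw_def)
  have "continuous_map (subtopology X (\<Union>\<X>)) X' \<Phi>"
    by (rule continuous_map_on_Union_closedin) (simp_all add: CW.finite_cells CW.closedin_cell cells(3))
  then have "continuous_map X X' \<Phi>"
    by (simp add: CW.Union_cells)
  moreover have "\<Phi> ` topspace X = topspace X'"
    using cells(1) \<phi>_onto CW.Union_cells CW'.Union_cells by (metis image_Union image_cong)
  moreover have "inj_on \<Phi> (topspace X)"
    using inj_on_Union_downclosed[of \<X>] \<Phi> CW.Union_cells by (simp add: downclosed_def)
  ultimately have "homeomorphic_map X X' \<Phi>"
    using continuous_imp_homeomorphic_map CW.compact_space CW'.Hausdorff by blast
  moreover have "\<Phi> ` Y = Y'"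
  proof -
    have Y_eq: "(\<Union>\<sigma>\<in>\<X>. \<sigma> \<inter> Y) = Y"
      using pair CW.Union_cells by (auto simp: finite_regular_CW_pair_def)
    have "(\<Union>\<sigma>\<in>\<X>. \<phi> \<sigma> \<inter> Y') = \<Union>(\<phi> ` \<X>) \<inter> Y'"
      by blast
    also have "\<dots> = Y'"
      using \<phi>_onto CW'.Union_cells pair' by (auto simp: finite_regular_CW_pair_def)
    finally have Y'_eq: "(\<Union>\<sigma>\<in>\<X>. \<phi> \<sigma> \<inter> Y') = Y'" .
    have "\<Phi> ` Y = \<Phi> ` (\<Union>\<sigma>\<in>\<X>. \<sigma> \<inter> Y)"
      by (simp only: Y_eq)
    also have "\<dots> = (\<Union>\<sigma>\<in>\<X>. \<phi> \<sigma> \<inter> Y')"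
      unfolding image_UN using cells(2) by (rule SUP_cong[OF refl])
    finally show ?thesis
      using Y'_eq by simp
  qed
  ultimately show ?thesis
    using cells(1) by blast
qed

end

theorem mainTheorem13:
  fixes X :: "'a topology" and X' :: "'b topology"
    and \<X> :: "'a set set" and \<X>' :: "'b set set"
    and Y :: "'a set" and Y' :: "'b set" and k :: nat
    and \<phi> :: "'a set \<Rightarrow> 'b set"
  assumes "finite_regular_CW_pair X \<X> Y k"
    and "finite_regular_CW_pair X' \<X>' Y' k"
    and "poset_iso \<phi> \<X> \<X>'"
    and "\<phi> ` cells_meeting \<X> Y = cells_meeting \<X>' Y'"
  shows "\<exists>\<Phi>. homeomorphic_map X X' \<Phi> \<and> (\<forall>\<sigma>\<in>\<X>. \<Phi> ` \<sigma> = \<phi> \<sigma>) \<and> \<Phi> ` Y = Y'"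
proof -
  interpret regular_CW_pair_iso X \<X> Y X' \<X>' Y' k \<phi>
    using assms by unfold_locales
  show ?thesis
    by (rule cellular_homeomorphism)
qed

end
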